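(* Let $F:\mathcal{G}_{\Sigma,\Delta,\pi}\to\mathcal{G}_{\Sigma,\Delta,\pi}$ be a causal graph dynamics. For every renaming $R$, $F$ admits at least one conjugate renaming $R'$, i.e. $F\circ R=R'\circ F$. Moreover, for any local rule $f$ of $F$ and any renaming $R$, $\mathrm{Conj}_f(R)\subseteq\mathrm{Conj}_F(R)$.
   Context: Fix an uncountably infinite set $\mathcal{V}$. For sets $\Sigma,\Delta$ and finite $\pi$, a graph $G$: countable $V(G)\subset\mathcal{V}$, a set $E(G)$ of pairwise disjoint two-element subsets of $V(G)\times\pi$ (write $u\!:\!i$), partial labelings $\sigma(G):V(G)\rightharpoonup\Sigma$, $\delta(G):E(G)\rightharpoonup\Delta$; $\mathcal{G}_{\Sigma,\Delta,\pi}$ the set of graphs. A renaming is a bijection $R:\mathcal{V}\to\mathcal{V}$, acting on edges by $R(\{u\!:\!i,v\!:\!j\})=\{R(u)\!:\!i,R(v)\!:\!j\}$, on graphs by $V(R(G))=R(V(G))$, $E(R(G))=R(E(G))$, $\sigma(R(G))=\sigma(G)\circ R^{-1}$, $\delta(R(G))=\delta(G)\circ R^{-1}$, and on pointed graphs by $R(G,v)=(R(G),R(v))$. Consistency: edge sets jointly pairwise disjoint, labelings agree on common domains; union/intersection componentwise; $\varnothing$ empty graph. Disk $G^r_c=(H,c)$: $V(H)=B_G(c,r+1)$ (shortest-path ball), $E(H)$ edges of $G$ with an endpoint in $B_G(c,r)$, $\sigma(H)=\sigma(G)|_{B_G(c,r)}$, $\delta(H)=\delta(G)|_{E(H)}$;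 $\mathcal{D}^r$ set of radius-$r$ disks. A local rule of radius $r$ is $f:\mathcal{D}^r\to\mathcal{G}$ with (1) for each renaming $R$ a renaming $R'$ with $f\circ R=R'\circ f$; (2) families of disks with empty intersection have images with empty intersection; (3) $|V(f(D))|$ uniformly bounded; (4) $f(G^r_u),f(G^r_v)$ consistent for all $G$ and $u,v\in V(G)$. A CGD is $F(G)=\bigcup_{v\in V(G)}f(G^r_v)$ for some local rule $f$ (a local rule of $F$). For a map $X$ (either $F$ or $f$) and renaming $R$, $\mathrm{Conj}_X(R)$ is the set of renamings $R'$ with $X\circ R=R'\circ X$. *)

theory Defs
  imports Main "HOL-Library.Countable_Set"
begin

text \<open>Graphs over vertex universe 'v, vertex labels 's (Sigma), edge labels 'd (Delta),
  ports 'p (the finite set pi). A port u:i is the pair (u,i).\<close>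

record ('v,'s,'d,'p) graph =
  gV :: "'v set"
  gE :: "('v \<times> 'p) set set"
  gsig :: "'v \<Rightarrow> 's option"
  gdel :: "('v \<times> 'p) set \<Rightarrow> 'd option"

definition is_graph :: "('v,'s,'d,'p::finite) graph \<Rightarrow> bool" where
  "is_graph G \<longleftrightarrow> countable (gV G)
     \<and> (\<forall>e\<in>gE G. \<exists>a b. a \<noteq> b \<and> e = {a, b} \<and> a \<in> gV G \<times> UNIV \<and> b \<in> gV G \<times> UNIV)
     \<and> (\<forall>e\<in>gE G. \<forall>e'\<in>gE G. e \<noteq> e' \<longrightarrow> e \<inter> e' = {})
     \<and> dom (gsig G) \<subseteq> gV G \<and> dom (gdel G) \<subseteq> gE G"

definition empty_graph :: "('v,'s,'d,'p) graph" where
  "empty_graph = \<lparr>gV = {}, gE = {}, gsig = Map.empty, gdel = Map.empty\<rparr>"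

definition rename_edge :: "('v \<Rightarrow> 'v) \<Rightarrow> ('v \<times> 'p) set \<Rightarrow> ('v \<times> 'p) set" where
  "rename_edge R e = (\<lambda>(u, i). (R u, i)) ` e"

definition rename :: "('v \<Rightarrow> 'v) \<Rightarrow> ('v,'s,'d,'p) graph \<Rightarrow> ('v,'s,'d,'p) graph" where
  "rename R G = \<lparr>gV = R ` gV G, gE = rename_edge R ` gE G,
                  gsig = gsig G \<circ> inv R, gdel = gdel G \<circ> rename_edge (inv R)\<rparr>"

definition rename_pt :: "('v \<Rightarrow> 'v) \<Rightarrow> ('v,'s,'d,'p) graph \<times> 'v \<Rightarrow> ('v,'s,'d,'p) graph \<times> 'v" where
  "rename_pt R D = (rename R (fst D), R (snd D))"

definition consistent :: "('v,'s,'d,'p) graph \<Rightarrow> ('v,'s,'d,'p) graph \<Rightarrow> bool" where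
  "consistent G H \<longleftrightarrow>
     (\<forall>e\<in>gE G. \<forall>e'\<in>gE H. e \<noteq> e' \<longrightarrow> e \<inter> e' = {})
   \<and> (\<forall>x a b. gsig G x = Some a \<and> gsig H x = Some b \<longrightarrow> a = b)
   \<and> (\<forall>x a b. gdel G x = Some a \<and> gdel H x = Some b \<longrightarrow> a = b)"

definition gunion :: "('v,'s,'d,'p) graph set \<Rightarrow> ('v,'s,'d,'p) graph" where
  "gunion S = \<lparr>gV = \<Union>(gV ` S), gE = \<Union>(gE ` S),
     gsig = (\<lambda>x. if \<exists>H\<in>S. gsig H x \<noteq> None
                 then gsig (SOME H. H \<in> S \<and> gsig H x \<noteq> None) x else None),
     gdel = (\<lambda>x. if \<exists>H\<in>S. gdel H x \<noteq> None
                 then gdel (SOME H. H \<in> S \<and> gdel H x \<noteq> None) x else None)\<rparr>"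

definition ginter :: "('v,'s,'d,'p) graph set \<Rightarrow> ('v,'s,'d,'p) graph" where
  "ginter S = \<lparr>gV = \<Inter>(gV ` S), gE = \<Inter>(gE ` S),
     gsig = (\<lambda>x. if \<forall>H\<in>S. gsig H x = gsig (SOME H. H \<in> S) x
                 then gsig (SOME H. H \<in> S) x else None),
     gdel = (\<lambda>x. if \<forall>H\<in>S. gdel H x = gdel (SOME H. H \<in> S) x
                 then gdel (SOME H. H \<in> S) x else None)\<rparr>"

definition adj :: "('v,'s,'d,'p) graph \<Rightarrow> ('v \<times> 'v) set" where
  "adj G = {(u, v). \<exists>i j. {(u, i), (v, j)} \<in> gE G}"

definition ball :: "('v,'s,'d,'p) graph \<Rightarrow> 'v \<Rightarrow> nat \<Rightarrow> 'v set" where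
  "ball G c n = {v. \<exists>k\<le>n. (c, v) \<in> adj G ^^ k}"

definition disk :: "nat \<Rightarrow> ('v,'s,'d,'p) graph \<Rightarrow> 'v \<Rightarrow> ('v,'s,'d,'p) graph \<times> 'v" where
  "disk r G c =
     (let EH = {e \<in> gE G. \<exists>u i. (u, i) \<in> e \<and> u \<in> ball G c r} in
      (\<lparr>gV = ball G c (Suc r), gE = EH,
         gsig = gsig G |` ball G c r, gdel = gdel G |` EH\<rparr>, c))"

definition disks :: "nat \<Rightarrow> (('v,'s,'d,'p::finite) graph \<times> 'v) set" where
  "disks r = {disk r G c | G c. is_graph G \<and> c \<in> gV G}"

definition local_rule :: "nat \<Rightarrow> (('v,'s,'d,'p::finite) graph \<times> 'v \<Rightarrow> ('v,'s,'d,'p) graph) \<Rightarrow> bool" where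
  "local_rule r f \<longleftrightarrow>
     (\<forall>D\<in>disks r. is_graph (f D))
   \<and> (\<forall>R. bij R \<longrightarrow> (\<exists>R'. bij R' \<and> (\<forall>D\<in>disks r. f (rename_pt R D) = rename R' (f D))))
   \<and> (\<forall>S. S \<subseteq> disks r \<and> S \<noteq> {} \<and> ginter (fst ` S) = empty_graph
          \<longrightarrow> ginter (f ` S) = empty_graph)
   \<and> (\<exists>b::nat. \<forall>D\<in>disks r. finite (gV (f D)) \<and> card (gV (f D)) \<le> b)
   \<and> (\<forall>G u v. is_graph G \<and> u \<in> gV G \<and> v \<in> gV G \<longrightarrow> consistent (f (disk r G u)) (f (disk r G v)))"

definition cgd_of :: "nat \<Rightarrow> (('v,'s,'d,'p) graph \<times> 'v \<Rightarrow> ('v,'s,'d,'p) graph)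
                      \<Rightarrow> ('v,'s,'d,'p) graph \<Rightarrow> ('v,'s,'d,'p) graph" where
  "cgd_of r f G = gunion ((\<lambda>v. f (disk r G v)) ` gV G)"

definition local_rule_of :: "(('v,'s,'d,'p::finite) graph \<Rightarrow> ('v,'s,'d,'p) graph) \<Rightarrow> nat
      \<Rightarrow> (('v,'s,'d,'p) graph \<times> 'v \<Rightarrow> ('v,'s,'d,'p) graph) \<Rightarrow> bool" where
  "local_rule_of F r f \<longleftrightarrow> local_rule r f \<and> (\<forall>G. is_graph G \<longrightarrow> F G = cgd_of r f G)"

definition is_CGD :: "(('v,'s,'d,'p::finite) graph \<Rightarrow> ('v,'s,'d,'p) graph) \<Rightarrow> bool" where
  "is_CGD F \<longleftrightarrow> (\<exists>r f. local_rule_of F r f)"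

definition conjF :: "(('v,'s,'d,'p::finite) graph \<Rightarrow> ('v,'s,'d,'p) graph) \<Rightarrow> ('v \<Rightarrow> 'v) \<Rightarrow> ('v \<Rightarrow> 'v) set" where
  "conjF F R = {R'. bij R' \<and> (\<forall>G. is_graph G \<longrightarrow> F (rename R G) = rename R' (F G))}"

definition conjf :: "nat \<Rightarrow> (('v,'s,'d,'p::finite) graph \<times> 'v \<Rightarrow> ('v,'s,'d,'p) graph)
                     \<Rightarrow> ('v \<Rightarrow> 'v) \<Rightarrow> ('v \<Rightarrow> 'v) set" where
  "conjf r f R = {R'. bij R' \<and> (\<forall>D\<in>disks r. f (rename_pt R D) = rename R' (f D))}"

end

theory Submission
  imports Defs
begin

(* F (R G) is the union of the images under f of the disks of R G. A renaming is a graph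
   isomorphism, so it preserves shortest-path balls and maps the disk of G centred at c onto the
   disk of R G centred at R c; and renaming commutes with the union of a pairwise consistent
   family of graphs. Hence every R' conjugating f on disks conjugates F. *)

lemma rename_edge_comp: "rename_edge R (rename_edge S e) = rename_edge (R \<circ> S) e"
  by (simp add: rename_edge_def image_comp comp_def case_prod_unfold)

lemma rename_edge_id: "rename_edge id e = e"
  by (simp add: rename_edge_def case_prod_unfold)

lemma rename_edge_doubleton: "rename_edge R {(u, i), (v, j)} = {(R u, i), (R v, j)}"
  by (simp add: rename_edge_def)

lemma rename_edge_Int: "inj R \<Longrightarrow> rename_edge R (e \<inter> e') = rename_edge R e \<inter> rename_edge R e'"
  unfolding rename_edge_def by (rule image_Int) (simp add: inj_def)

lemma rename_edge_disjoint:
  assumes "inj R" "e \<inter> e' = {}"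
  shows "rename_edge R e \<inter> rename_edge R e' = {}"
  using rename_edge_Int[OF assms(1), of e e'] assms(2) by (simp add: rename_edge_def)

lemma inv_rename_edge:
  assumes "bij R"
  shows "inv (rename_edge R) = rename_edge (inv R)"
  using assms
  by (intro inv_unique_comp)
     (simp_all add: fun_eq_iff rename_edge_comp rename_edge_id bij_is_inj
       bij_is_surj surj_iff[THEN iffD1])

lemma bij_rename_edge: "bij R \<Longrightarrow> bij (rename_edge R)"
  by (rule o_bij[of "rename_edge (inv R)"])
     (simp_all add: fun_eq_iff rename_edge_comp rename_edge_id bij_is_inj
       bij_is_surj surj_iff[THEN iffD1])

lemma mem_image_iff_inv_mem: "bij f \<Longrightarrow> x \<in> f ` A \<longleftrightarrow> inv f x \<in> A"
  by (metis bij_image_Collect_eq mem_Collect_eq Collect_mem_eq)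

lemma dom_comp_inv: "bij f \<Longrightarrow> dom (m \<circ> inv f) = f ` dom m"
  by (auto simp: dom_def mem_image_iff_inv_mem bij_is_inj)

lemma restrict_map_comp_inv: "bij f \<Longrightarrow> (m \<circ> inv f) |` (f ` A) = (m |` A) \<circ> inv f"
  by (auto simp: restrict_map_def mem_image_iff_inv_mem)

lemma rename_sel:
  "gV (rename R G) = R ` gV G" "gE (rename R G) = rename_edge R ` gE G"
  "gsig (rename R G) = gsig G \<circ> inv R"
  by (simp_all add: rename_def)

lemma gdel_rename: "bij R \<Longrightarrow> gdel (rename R G) = gdel G \<circ> inv (rename_edge R)"
  by (simp add: rename_def inv_rename_edge)

lemma adj_rename:
  assumes "bij R"
  shows "(R u, R v) \<in> adj (rename R G) \<longleftrightarrow> (u, v) \<in> adj G"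
proof -
  have "{(R u, i), (R v, j)} \<in> rename_edge R ` gE G \<longleftrightarrow> {(u, i), (v, j)} \<in> gE G" for i j
    using inj_image_mem_iff[OF bij_is_inj[OF bij_rename_edge[OF assms]]]
    by (metis rename_edge_doubleton)
  then show ?thesis by (simp add: adj_def rename_sel)
qed

lemma relpow_adj_rename:
  assumes "bij R"
  shows "(R c, R v) \<in> adj (rename R G) ^^ k \<longleftrightarrow> (c, v) \<in> adj G ^^ k"
proof (induction k arbitrary: v)
  case 0
  then show ?case using bij_is_inj[OF assms] by (simp add: inj_eq)
next
  case (Suc k)
  let ?A = "adj (rename R G)"
  have "(R c, R v) \<in> ?A ^^ Suc k \<longleftrightarrow> (\<exists>y. (R c, y) \<in> ?A ^^ k \<and> (y, R v) \<in> ?A)"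
    by auto
  also have "\<dots> \<longleftrightarrow> (\<exists>y. (R c, R y) \<in> ?A ^^ k \<and> (R y, R v) \<in> ?A)"
    by (metis surjD[OF bij_is_surj[OF assms]])
  also have "\<dots> \<longleftrightarrow> (c, v) \<in> adj G ^^ Suc k"
    unfolding Suc adj_rename[OF assms] by auto
  finally show ?case .
qed

lemma ball_rename:
  assumes "bij R"
  shows "ball (rename R G) (R c) n = R ` ball G c n"
proof -
  have "R y \<in> ball (rename R G) (R c) n \<longleftrightarrow> y \<in> ball G c n" for y
    by (simp add: ball_def relpow_adj_rename[OF assms])
  then have "x \<in> ball (rename R G) (R c) n \<longleftrightarrow> inv R x \<in> ball G c n" for x
    by (metis bij_inv_eq_iff assms)
  then show ?thesis by (simp add: set_eq_iff mem_image_iff_inv_mem[OF assms])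
qed

lemma rename_edge_meets_image_iff:
  "inj R \<Longrightarrow> (\<exists>u i. (u, i) \<in> rename_edge R e \<and> u \<in> R ` B) \<longleftrightarrow> (\<exists>u i. (u, i) \<in> e \<and> u \<in> B)"
  by (auto simp: rename_edge_def inj_eq) force

lemma disk_rename:
  assumes "bij R"
  shows "disk r (rename R G) (R c) = rename_pt R (disk r G c)"
proof -
  define B where "B = ball G c r"
  define EH where "EH = {e \<in> gE G. \<exists>u i. (u, i) \<in> e \<and> u \<in> B}"
  have "{e \<in> gE (rename R G). \<exists>u i. (u, i) \<in> e \<and> u \<in> R ` B}
      = rename_edge R ` {e \<in> gE G. \<exists>u i. (u, i) \<in> rename_edge R e \<and> u \<in> R ` B}"
    by (auto simp: rename_sel)
  then have EH_rename: "{e \<in> gE (rename R G). \<exists>u i. (u, i) \<in> e \<and> u \<in> R ` B} = rename_edge R ` EH"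
    by (simp only: rename_edge_meets_image_iff[OF bij_is_inj[OF assms]] EH_def)
  show ?thesis
    unfolding disk_def Let_def rename_pt_def ball_rename[OF assms] B_def[symmetric] EH_def[symmetric]
      EH_rename
    using assms
    by (simp add: rename_def restrict_map_comp_inv bij_rename_edge flip: inv_rename_edge)
qed

lemma is_graph_edgeE:
  assumes "is_graph G" "e \<in> gE G"
  obtains u i v j where "(u, i) \<noteq> (v, j)" "u \<in> gV G" "v \<in> gV G" "e = {(u, i), (v, j)}"
proof -
  have "\<forall>e\<in>gE G. \<exists>a b. a \<noteq> b \<and> e = {a, b} \<and> a \<in> gV G \<times> UNIV \<and> b \<in> gV G \<times> UNIV"
    using assms(1) unfolding is_graph_def by (elim conjE)
  then show ?thesis using assms(2) that by fastforce
qed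

lemma is_graph_rename:
  assumes R: "bij R" and G: "is_graph G"
  shows "is_graph (rename R G)"
  unfolding is_graph_def
proof (intro conjI ballI impI)
  show "countable (gV (rename R G))"
    using G by (simp add: is_graph_def rename_sel)
next
  fix e assume "e \<in> gE (rename R G)"
  then obtain e0 where "e0 \<in> gE G" and e0: "e = rename_edge R e0"
    by (auto simp: rename_sel)
  obtain u i v j where uv: "(u, i) \<noteq> (v, j)" "u \<in> gV G" "v \<in> gV G"
    and "e0 = {(u, i), (v, j)}"
    using is_graph_edgeE[OF G \<open>e0 \<in> gE G\<close>] .
  then have "e = {(R u, i), (R v, j)}" and "(R u, i) \<noteq> (R v, j)"
    using e0 bij_is_inj[OF R] by (auto simp: rename_edge_doubleton inj_eq)
  then show "\<exists>a b. a \<noteq> b \<and> e = {a, b} \<and> a \<in> gV (rename R G) \<times> UNIV \<and> b \<in> gV (rename R G) \<times> UNIV"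
    using uv by (intro exI[of _ "(R u, i)"] exI[of _ "(R v, j)"]) (simp add: rename_sel)
next
  fix e e' assume "e \<in> gE (rename R G)" "e' \<in> gE (rename R G)" "e \<noteq> e'"
  then obtain e0 e0' where "e0 \<in> gE G" "e0' \<in> gE G" "e0 \<noteq> e0'"
    and "e = rename_edge R e0" "e' = rename_edge R e0'"
    by (auto simp: rename_sel)
  then show "e \<inter> e' = {}"
    using G bij_is_inj[OF R] by (simp add: is_graph_def rename_edge_disjoint)
next
  show "dom (gsig (rename R G)) \<subseteq> gV (rename R G)"
    using G R by (simp add: is_graph_def rename_sel dom_comp_inv image_mono)
  show "dom (gdel (rename R G)) \<subseteq> gE (rename R G)"
    using G R by (simp add: is_graph_def rename_sel gdel_rename dom_comp_inv bij_rename_edge image_mono)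
qed

lemma consistent_rename:
  assumes R: "bij R" and GH: "consistent G H"
  shows "consistent (rename R G) (rename R H)"
proof -
  have "rename_edge R e \<inter> rename_edge R e' = {}"
    if "e \<in> gE G" "e' \<in> gE H" "rename_edge R e \<noteq> rename_edge R e'" for e e'
  proof -
    have "e \<noteq> e'" using that(3) by blast
    then show ?thesis
      using that(1,2) GH bij_is_inj[OF R] by (simp add: consistent_def rename_edge_disjoint)
  qed
  then show ?thesis using GH by (auto simp: consistent_def rename_sel gdel_rename[OF R])
qed

lemma choice_agreeing_eq_Some_iff:
  assumes "\<And>H H' a b. H \<in> S \<Longrightarrow> H' \<in> S \<Longrightarrow> m H = Some a \<Longrightarrow> m H' = Some b \<Longrightarrow> a = b"
  shows "(if \<exists>H\<in>S. m H \<noteq> None then m (SOME H. H \<in> S \<and> m H \<noteq> None) else None) = Some a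
    \<longleftrightarrow> (\<exists>H\<in>S. m H = Some a)"
proof (cases "\<exists>H\<in>S. m H \<noteq> None")
  case True
  then have "(SOME H. H \<in> S \<and> m H \<noteq> None) \<in> S \<and> m (SOME H. H \<in> S \<and> m H \<noteq> None) \<noteq> None"
    using someI_ex[of "\<lambda>H. H \<in> S \<and> m H \<noteq> None"] by blast
  then show ?thesis using True assms by auto
qed auto

lemma gsig_gunion_eq_Some_iff:
  assumes "pairwise consistent S"
  shows "gsig (gunion S) x = Some a \<longleftrightarrow> (\<exists>H\<in>S. gsig H x = Some a)"
  unfolding gunion_def graph.select_convs
  by (rule choice_agreeing_eq_Some_iff) (metis assms pairwise_def consistent_def option.inject)

lemma gdel_gunion_eq_Some_iff:
  assumes "pairwise consistent S"
  shows "gdel (gunion S) x = Some a \<longleftrightarrow> (\<exists>H\<in>S. gdel H x = Some a)"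
  unfolding gunion_def graph.select_convs
  by (rule choice_agreeing_eq_Some_iff) (metis assms pairwise_def consistent_def option.inject)

lemma map_eqI_Some: "(\<And>x a. m x = Some a \<longleftrightarrow> m' x = Some a) \<Longrightarrow> m = m'"
  by (metis ext not_Some_eq)

lemma gunion_rename:
  assumes R: "bij R" and S: "pairwise consistent S"
  shows "gunion (rename R ` S) = rename R (gunion S)"
proof -
  have S': "pairwise consistent (rename R ` S)"
    using S unfolding pairwise_def by (metis consistent_rename[OF R] imageE)
  have "gsig (gunion (rename R ` S)) = gsig (gunion S) \<circ> inv R"
    by (rule map_eqI_Some)
      (simp add: gsig_gunion_eq_Some_iff[OF S] gsig_gunion_eq_Some_iff[OF S'] rename_sel)
  moreover have "gdel (gunion (rename R ` S)) = gdel (gunion S) \<circ> inv (rename_edge R)"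
    by (rule map_eqI_Some)
      (simp add: gdel_gunion_eq_Some_iff[OF S] gdel_gunion_eq_Some_iff[OF S'] gdel_rename[OF R])
  ultimately show ?thesis
    by (simp add: gunion_def rename_def image_UN inv_rename_edge[OF R])
qed

lemma pairwise_consistent_local_images:
  assumes "local_rule r f" "is_graph G"
  shows "pairwise consistent ((\<lambda>v. f (disk r G v)) ` gV G)"
  using assms by (auto simp: local_rule_def pairwise_def)

lemma cgd_of_rename:
  assumes f: "local_rule r f" and R: "bij R" and R': "R' \<in> conjf r f R" and G: "is_graph G"
  shows "cgd_of r f (rename R G) = rename R' (cgd_of r f G)"
proof -
  have "f (disk r (rename R G) (R v)) = rename R' (f (disk r G v))" if "v \<in> gV G" for v
  proof -
    have "disk r G v \<in> disks r" using that G by (auto simp: disks_def)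
    then show ?thesis using R' by (simp add: conjf_def disk_rename[OF R])
  qed
  then have "(\<lambda>w. f (disk r (rename R G) w)) ` gV (rename R G)
      = rename R' ` (\<lambda>v. f (disk r G v)) ` gV G"
    by (simp add: rename_sel image_image cong: image_cong)
  moreover have "bij R'" using R' by (simp add: conjf_def)
  ultimately show ?thesis
    unfolding cgd_of_def by (simp add: gunion_rename pairwise_consistent_local_images[OF f G])
qed

lemma conjf_subset_conjF:
  assumes "local_rule_of F r f" "bij R"
  shows "conjf r f R \<subseteq> conjF F R"
proof
  fix R' assume R': "R' \<in> conjf r f R"
  have "F (rename R G) = rename R' (F G)" if "is_graph G" for G
    using assms R' that by (simp add: local_rule_of_def is_graph_rename cgd_of_rename)
  moreover have "bij R'" using R' by (simp add: conjf_def)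
  ultimately show "R' \<in> conjF F R" by (simp add: conjF_def)
qed

theorem proposition1p7:
  fixes F :: "('v,'s,'d,'p::finite) graph \<Rightarrow> ('v,'s,'d,'p) graph"
  assumes "uncountable (UNIV :: 'v set)"
    and "is_CGD F"
  shows "(\<forall>R. bij R \<longrightarrow> conjF F R \<noteq> {})
       \<and> (\<forall>r f R. local_rule_of F r f \<and> bij R \<longrightarrow> conjf r f R \<subseteq> conjF F R)"
proof (intro conjI allI impI)
  \<comment> \<open>Existence is inherited from condition (1) on local rules.\<close>
  fix R :: "'v \<Rightarrow> 'v" assume R: "bij R"
  obtain r f where F: "local_rule_of F r f" using assms(2) by (auto simp: is_CGD_def)
  then have "conjf r f R \<noteq> {}"
    using R by (auto simp: local_rule_of_def local_rule_def conjf_def)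
  then show "conjF F R \<noteq> {}" using conjf_subset_conjF[OF F R] by blast
qed (use conjf_subset_conjF in blast)

end
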